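(* Let $G$ be a graph and let $x$ be a vertex of odd degree in $G$ such that the subgraph induced by the neighbours of $x$ is a path $P$. Then in any proper $3$-colouring of $G$, the two end-points of $P$ receive the same colour.
   Context: A proper $3$-colouring assigns to each vertex one of three colours so that adjacent vertices receive different colours. *)

theory Defs
  imports Main
begin

definition graph :: "'a set \<Rightarrow> ('a \<Rightarrow> 'a \<Rightarrow> bool) \<Rightarrow> bool" where
  "graph V E \<longleftrightarrow> (\<forall>u v. E u v \<longrightarrow> u \<in> V \<and> v \<in> V) \<and>
                   (\<forall>u v. E u v \<longrightarrow> E v u) \<and> (\<forall>v. \<not> E v v)"

definition neighbours :: "'a set \<Rightarrow> ('a \<Rightarrow> 'a \<Rightarrow> bool) \<Rightarrow> 'a \<Rightarrow> 'a set" where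
  "neighbours V E x = {y \<in> V. E x y}"

definition degree :: "'a set \<Rightarrow> ('a \<Rightarrow> 'a \<Rightarrow> bool) \<Rightarrow> 'a \<Rightarrow> nat" where
  "degree V E x = card (neighbours V E x)"

definition induced_path :: "('a \<Rightarrow> 'a \<Rightarrow> bool) \<Rightarrow> 'a set \<Rightarrow> 'a list \<Rightarrow> bool" where
  "induced_path E S p \<longleftrightarrow> p \<noteq> [] \<and> distinct p \<and> set p = S \<and>
     (\<forall>i < length p. \<forall>j < length p. E (p ! i) (p ! j) \<longleftrightarrow> (i + 1 = j \<or> j + 1 = i))"

definition proper_3_colouring :: "'a set \<Rightarrow> ('a \<Rightarrow> 'a \<Rightarrow> bool) \<Rightarrow> ('a \<Rightarrow> nat) \<Rightarrow> bool" where
  "proper_3_colouring V E c \<longleftrightarrow> (\<forall>v \<in> V. c v < 3) \<and> (\<forall>u v. E u v \<longrightarrow> c u \<noteq> c v)"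

end

theory Submission
  imports Defs
begin

text \<open>All neighbours of x avoid the colour of x, so the path P is properly coloured with the
two remaining colours. A properly 2-coloured path alternates, hence its vertices at even
positions share one colour; P has odd length deg x, so both end-points sit at even positions.\<close>

lemma two_coloured_alternates:
  assumes "finite C" "card C \<le> 2" "c ` set p \<subseteq> C"
    and "\<And>i. Suc i < length p \<Longrightarrow> c (p ! i) \<noteq> c (p ! Suc i)"
    and "Suc (Suc i) < length p"
  shows "c (p ! Suc (Suc i)) = c (p ! i)"
proof (rule ccontr)
  let ?u = "c (p ! i)" and ?v = "c (p ! Suc i)" and ?w = "c (p ! Suc (Suc i))"
  assume "?w \<noteq> ?u"
  moreover have "?u \<noteq> ?v" "?v \<noteq> ?w" using assms(4,5) by auto
  ultimately have "card {?u, ?v, ?w} = 3" by auto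
  moreover have "{?u, ?v, ?w} \<subseteq> C" using assms(3,5) by auto
  then have "card {?u, ?v, ?w} \<le> card C" using assms(1) by (rule card_mono[rotated])
  ultimately show False using assms(2) by linarith
qed

lemma two_coloured_even_positions:
  assumes "finite C" "card C \<le> 2" "c ` set p \<subseteq> C"
    and "\<And>i. Suc i < length p \<Longrightarrow> c (p ! i) \<noteq> c (p ! Suc i)"
  shows "2 * k < length p \<Longrightarrow> c (p ! (2 * k)) = c (p ! 0)"
proof (induction k)
  case (Suc k)
  have "c (p ! Suc (Suc (2 * k))) = c (p ! (2 * k))"
    by (rule two_coloured_alternates[of C c p, OF assms]) (use Suc.prems in auto)
  with Suc show ?case by simp
qed simp

lemma two_coloured_odd_path_ends:
  assumes "finite C" "card C \<le> 2" "c ` set p \<subseteq> C"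
    and "\<And>i. Suc i < length p \<Longrightarrow> c (p ! i) \<noteq> c (p ! Suc i)"
    and "odd (length p)"
  shows "c (hd p) = c (last p)"
proof -
  obtain k where k: "length p = 2 * k + 1" using assms(5) oddE by blast
  then have "c (p ! (2 * k)) = c (p ! 0)"
    using two_coloured_even_positions[of C c p, OF assms(1-4)] by simp
  moreover have "p \<noteq> []" using k by auto
  ultimately show ?thesis using k by (simp add: hd_conv_nth last_conv_nth)
qed

lemma induced_path_consecutive_adjacent:
  assumes "induced_path E S p" "Suc i < length p"
  shows "E (p ! i) (p ! Suc i)"
  using assms unfolding induced_path_def by auto

lemma induced_path_length:
  assumes "induced_path E S p"
  shows "length p = card S"
  using assms distinct_card unfolding induced_path_def by fastforce

lemma proper_3_colouring_neighbours:
  assumes "proper_3_colouring V E c"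
  shows "c ` neighbours V E x \<subseteq> {0..<3} - {c x}"
  using assms unfolding proper_3_colouring_def neighbours_def by fastforce

theorem lemma1:
  fixes V :: "'a set" and E :: "'a \<Rightarrow> 'a \<Rightarrow> bool" and x :: 'a
    and p :: "'a list" and c :: "'a \<Rightarrow> nat"
  assumes "graph V E"
    and "x \<in> V"
    and "finite (neighbours V E x)"
    and "odd (degree V E x)"
    and "induced_path E (neighbours V E x) p"
    and "proper_3_colouring V E c"
  shows "c (hd p) = c (last p)"
proof (rule two_coloured_odd_path_ends)
  have "set p = neighbours V E x" using assms(5) unfolding induced_path_def by blast
  then show "c ` set p \<subseteq> {0..<3} - {c x}"
    using proper_3_colouring_neighbours[OF assms(6)] by simp
  have "c x < 3" using assms(2,6) unfolding proper_3_colouring_def by blast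
  then show "card ({0..<3} - {c x}) \<le> 2" by simp
  show "c (p ! i) \<noteq> c (p ! Suc i)" if "Suc i < length p" for i
    using assms(6) induced_path_consecutive_adjacent[OF assms(5) that]
    unfolding proper_3_colouring_def by blast
  show "odd (length p)"
    using assms(4) induced_path_length[OF assms(5)] unfolding degree_def by simp
qed simp

end
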